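(* Let $(K,v)$ be an extremal valued field with value group $\Gamma$. Then $\Gamma$ is divisible or a $\mathbb{Z}$-group.
   Context: $(K,v)$ with valuation ring $\mathcal{O}_v$ and value group $\Gamma$ (and $v(0)=\infty$) is extremal if for every $n\ge1$ and every $F\in K[X_1,\dots,X_n]$ the set $\{v(F(a_1,\dots,a_n)) : a_i\in\mathcal{O}_v\}\subseteq\Gamma\cup\{\infty\}$ has a maximal element. An ordered abelian group is regular if for every $n\ge1$ every open interval containing at least $n$ elements contains an $n$-divisible element; a $\mathbb{Z}$-group is a regular ordered abelian group with a smallest positive element. *)

theory Defs
  imports Main
begin

text \<open>A (Krull) valuation on a field 'k with value group the whole ordered abelian
group 'g. The value v 0 is irrelevant (junk); v(0) = \<infinity> is treated
explicitly via vext below.\<close>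
definition valuation :: "('k::field \<Rightarrow> 'g::linordered_ab_group_add) \<Rightarrow> bool" where
  "valuation v \<longleftrightarrow>
     (\<forall>x y. x \<noteq> 0 \<longrightarrow> y \<noteq> 0 \<longrightarrow> v (x * y) = v x + v y) \<and>
     (\<forall>x y. x \<noteq> 0 \<longrightarrow> y \<noteq> 0 \<longrightarrow> x + y \<noteq> 0 \<longrightarrow> min (v x) (v y) \<le> v (x + y)) \<and>
     v ` {x. x \<noteq> 0} = UNIV"

definition val_ring :: "('k::field \<Rightarrow> 'g::linordered_ab_group_add) \<Rightarrow> 'k set" where
  "val_ring v = {x. x = 0 \<or> 0 \<le> v x}"

text \<open>Extended valuation into Gamma \<union> {\<infinity>}: None represents \<infinity>.\<close>
definition vext :: "('k::field \<Rightarrow> 'g) \<Rightarrow> 'k \<Rightarrow> 'g option" where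
  "vext v x = (if x = 0 then None else Some (v x))"

definition ext_le :: "'g::linorder option \<Rightarrow> 'g option \<Rightarrow> bool" where
  "ext_le x y = (case y of None \<Rightarrow> True
                 | Some b \<Rightarrow> (case x of None \<Rightarrow> False | Some a \<Rightarrow> a \<le> b))"

text \<open>Polynomial functions K^n \<rightarrow> K in the variables X_0,...,X_{n-1}
(points are functions nat \<Rightarrow> 'k; only coordinates < n matter).\<close>
inductive_set poly_fun :: "nat \<Rightarrow> ((nat \<Rightarrow> 'k::field) \<Rightarrow> 'k) set" for n :: nat
  where
    pf_const: "(\<lambda>a. c) \<in> poly_fun n"
  | pf_var: "i < n \<Longrightarrow> (\<lambda>a. a i) \<in> poly_fun n"
  | pf_add: "f \<in> poly_fun n \<Longrightarrow> g \<in> poly_fun n \<Longrightarrow> (\<lambda>a. f a + g a) \<in> poly_fun n"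
  | pf_mult: "f \<in> poly_fun n \<Longrightarrow> g \<in> poly_fun n \<Longrightarrow> (\<lambda>a. f a * g a) \<in> poly_fun n"

definition extremal :: "('k::field \<Rightarrow> 'g::linordered_ab_group_add) \<Rightarrow> bool" where
  "extremal v \<longleftrightarrow>
     (\<forall>n::nat. n \<ge> 1 \<longrightarrow> (\<forall>F \<in> poly_fun n.
        (\<exists>a. (\<forall>i<n. a i \<in> val_ring v) \<and>
             (\<forall>b. (\<forall>i<n. b i \<in> val_ring v) \<longrightarrow> ext_le (vext v (F b)) (vext v (F a))))))"

primrec gmul :: "nat \<Rightarrow> 'g::ab_group_add \<Rightarrow> 'g" where
  "gmul 0 x = 0"
| "gmul (Suc n) x = gmul n x + x"

definition divisible_group :: "'g::ab_group_add itself \<Rightarrow> bool" where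
  "divisible_group _ \<longleftrightarrow> (\<forall>n::nat. n \<ge> 1 \<longrightarrow> (\<forall>x::'g. \<exists>y. gmul n y = x))"

definition regular_group :: "'g::linordered_ab_group_add itself \<Rightarrow> bool" where
  "regular_group _ \<longleftrightarrow>
     (\<forall>n::nat. n \<ge> 1 \<longrightarrow> (\<forall>a b :: 'g.
        (\<exists>S. S \<subseteq> {a<..<b} \<and> finite S \<and> card S = n) \<longrightarrow>
        (\<exists>x\<in>{a<..<b}. \<exists>y. x = gmul n y)))"

definition Z_group :: "'g::linordered_ab_group_add itself \<Rightarrow> bool" where
  "Z_group T \<longleftrightarrow> regular_group T \<and> (\<exists>e::'g. 0 < e \<and> (\<forall>x::'g. 0 < x \<longrightarrow> e \<le> x))"

end

theory Submission
  imports Defs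
begin

text \<open>
  Suppose the value group \<Gamma> is not divisible, so some \<gamma> is not an N-th multiple.
  With M = 2N, neither \<gamma> nor 2\<gamma> lies in M\<Gamma>.  Choose b, c, d with v(b) = \<gamma>,
  v(c) = \<mu> = |\<gamma>| and v(d) = \<epsilon> = 2\<gamma> - 4M\<mu>, and consider the polynomial
    F(x,y) = x^M + b y^M + d (xy - c)^M.
  Its three monomials have values in the pairwise different cosets 0, \<gamma>, \<epsilon> of M\<Gamma>,
  so v(F) is the minimum of their values.  On the hyperbola xy = c this minimum is
  the "tent" function min(M\<delta>, \<gamma> + M(\<mu> - \<delta>)) of \<delta> = v(x), and \<epsilon> is so negative
  that a maximiser of v(F) on the valuation ring must lie near the hyperbola.  Hence
  extremality makes the tent function attain its maximum over [0,\<mu>] at a value of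
  the group.  Since the peak of the tent is not in \<Gamma> (as \<gamma> \<notin> M\<Gamma>), this is only
  possible when \<Gamma> has a smallest positive element e, and then \<gamma> is congruent
  modulo M\<Gamma> to a multiple of e.  Applying this to every element and every modulus
  shows that each residue class of \<Gamma>/n\<Gamma> contains a multiple of e, which together
  with discreteness gives regularity.
\<close>

section \<open>Multiples in abelian groups\<close>

lemma gmul_zero_right [simp]: "gmul n (0::'g::ab_group_add) = 0"
  by (induct n) auto

lemma gmul_add_left: "gmul (m + n) (x::'g::ab_group_add) = gmul m x + gmul n x"
  by (induct n) (auto simp: algebra_simps)

lemma gmul_add_right: "gmul n ((x::'g::ab_group_add) + y) = gmul n x + gmul n y"
  by (induct n) (auto simp: algebra_simps)

lemma gmul_minus: "gmul n (- (x::'g::ab_group_add)) = - gmul n x"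
  by (induct n) (auto simp: algebra_simps)

lemma gmul_diff: "gmul n ((x::'g::ab_group_add) - y) = gmul n x - gmul n y"
  using gmul_add_right[of n x "- y"] by (simp add: gmul_minus)

lemma gmul_mult: "gmul (m * n) (x::'g::ab_group_add) = gmul m (gmul n x)"
  by (induct m) (auto simp: gmul_add_left)

definition multiple_of :: "nat \<Rightarrow> 'g::ab_group_add \<Rightarrow> bool" where
  "multiple_of n x \<longleftrightarrow> (\<exists>y. x = gmul n y)"

lemma multiple_of_gmul [simp]: "multiple_of n (gmul n y)"
  by (auto simp: multiple_of_def)

lemma multiple_of_zero [simp]: "multiple_of n 0"
  using multiple_of_gmul[of n 0] by simp

lemma multiple_of_add: "multiple_of n x \<Longrightarrow> multiple_of n y \<Longrightarrow> multiple_of n (x + y)"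
  by (auto simp: multiple_of_def gmul_add_right[symmetric])

lemma multiple_of_uminus: "multiple_of n x \<Longrightarrow> multiple_of n (- x)"
  by (auto simp: multiple_of_def gmul_minus[symmetric])

lemma multiple_of_diff: "multiple_of n x \<Longrightarrow> multiple_of n y \<Longrightarrow> multiple_of n (x - y)"
  using multiple_of_add[of n x "- y"] multiple_of_uminus[of n y] by simp

lemma multiple_of_mult_left: "multiple_of (m * n) x \<Longrightarrow> multiple_of n x"
  by (auto simp: multiple_of_def gmul_mult mult.commute[of m])

text \<open>Elements lying in different cosets of M\<Gamma> are different; this is how values of
  monomials in distinct cosets are separated.\<close>
lemma residue_distinct:
  assumes "\<not> multiple_of M (g - h)"
  shows "h + gmul M u \<noteq> g + gmul M w"
proof
  assume "h + gmul M u = g + gmul M w"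
  then have "g - h = gmul M (u - w)" by (simp add: gmul_diff algebra_simps)
  with assms show False by simp
qed

section \<open>Discrete ordered abelian groups\<close>

lemma gmul_nonneg: "0 \<le> (x::'g::linordered_ab_group_add) \<Longrightarrow> 0 \<le> gmul n x"
  by (induct n) auto

lemma gmul_pos: "0 < (x::'g::linordered_ab_group_add) \<Longrightarrow> n \<ge> 1 \<Longrightarrow> 0 < gmul n x"
  by (cases n) (simp_all add: add_nonneg_pos gmul_nonneg less_imp_le)

lemma gmul_mono: "(x::'g::linordered_ab_group_add) \<le> y \<Longrightarrow> gmul n x \<le> gmul n y"
  using gmul_nonneg[of "y - x" n] by (simp add: gmul_diff)

lemma gmul_ge: "0 \<le> (x::'g::linordered_ab_group_add) \<Longrightarrow> n \<ge> 1 \<Longrightarrow> x \<le> gmul n x"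
  by (cases n) (auto intro: add_increasing gmul_nonneg)

lemma double_cancel: "(a::'g::linordered_ab_group_add) + a = b + b \<Longrightarrow> a = b"
  by (metis add_strict_mono linorder_neqE less_irrefl)

definition smallest_positive :: "'g::linordered_ab_group_add \<Rightarrow> bool" where
  "smallest_positive e \<longleftrightarrow> 0 < e \<and> (\<forall>x>0. e \<le> x)"

lemma smallest_positive_unique:
  "smallest_positive e \<Longrightarrow> smallest_positive e' \<Longrightarrow> e = e'"
  by (auto simp: smallest_positive_def intro: antisym)

lemma small_multiples_if_dense:
  fixes D :: "'g::linordered_ab_group_add"
  assumes dense: "\<nexists>e::'g. smallest_positive e" and "0 < D"
  shows "\<exists>h>0. gmul M h < D"
  using \<open>0 < D\<close>
proof (induct M arbitrary: D)
  case 0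
  then show ?case by (auto intro!: exI[of _ D])
next
  case (Suc M)
  have "\<forall>e::'g>0. \<exists>x>0. x < e" using dense unfolding smallest_positive_def by (meson not_le)
  then obtain x where x: "0 < x" "x < D" using Suc.prems by blast
  define D' where "D' = min x (D - x)"
  have "0 < D'" using x by (simp add: D'_def)
  then obtain h' where h': "0 < h'" "gmul M h' < D'" using Suc.hyps by blast
  define h where "h = min h' D'"
  have "gmul M h \<le> gmul M h'" by (rule gmul_mono) (simp add: h_def)
  then have "gmul M h + h < D' + D'"
    using h' by (intro add_less_le_mono) (auto simp: h_def)
  also have "\<dots> \<le> x + (D - x)" by (intro add_mono) (auto simp: D'_def)
  finally have "gmul (Suc M) h < D" by simp
  moreover have "0 < h" using h' \<open>0 < D'\<close> by (simp add: h_def)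
  ultimately show ?case by blast
qed

lemma multiple_of_smallest_positive:
  fixes D :: "'g::linordered_ab_group_add"
  assumes e: "smallest_positive e" and "0 \<le> D" "D \<le> gmul k e"
  shows "\<exists>j. D = gmul j e"
  using assms(2,3)
proof (induct k)
  case (Suc k)
  show ?case
  proof (cases "D \<le> gmul k e")
    case True
    then show ?thesis using Suc by blast
  next
    case False
    then have "e \<le> D - gmul k e" using e by (simp add: smallest_positive_def)
    moreover have "D - gmul k e \<le> e" using Suc.prems by (simp add: algebra_simps)
    ultimately have "e = D - gmul k e" by (rule antisym)
    then have "D = gmul (Suc k) e" by (simp add: algebra_simps)
    then show ?thesis by blast
  qed
qed (auto intro!: exI[of _ 0])

lemma smallest_positive_from_gap:
  fixes D w :: "'g::linordered_ab_group_add"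
  assumes D: "0 < D" and w: "0 < w"
    and gap: "\<And>h. 0 < h \<Longrightarrow> h \<le> w \<Longrightarrow> D \<le> gmul M h"
  shows "\<exists>e::'g. smallest_positive e \<and> (\<exists>j. D = gmul j e)"
proof -
  have "\<exists>e::'g. smallest_positive e"
  proof (rule ccontr)
    assume "\<nexists>e::'g. smallest_positive e"
    then obtain h where h: "0 < h" "gmul M h < D"
      using small_multiples_if_dense D by blast
    have "gmul M (min h w) \<le> gmul M h" by (rule gmul_mono) simp
    moreover have "D \<le> gmul M (min h w)" using gap h w by simp
    ultimately show False using h by simp
  qed
  then obtain e :: 'g where e: "smallest_positive e" ..
  then have "D \<le> gmul M e" using gap w by (simp add: smallest_positive_def)
  then show ?thesis
    using multiple_of_smallest_positive[OF e] D e by auto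
qed

lemma points_above:
  fixes a e :: "'g::linordered_ab_group_add"
  assumes e: "smallest_positive e"
  shows "finite S \<Longrightarrow> card S = n \<Longrightarrow> n \<ge> 1 \<Longrightarrow> S \<subseteq> {a<..} \<Longrightarrow> \<exists>s\<in>S. a + gmul n e \<le> s"
proof (induct n arbitrary: S)
  case (Suc n)
  define s where "s = Max S"
  have "S \<noteq> {}" using Suc.prems(2) by auto
  then have s: "s \<in> S" "\<forall>s'\<in>S. s' \<le> s"
    using Suc.prems(1) by (auto simp: s_def)
  have below_s: "x + e \<le> s" if "x < s" for x
  proof -
    have "e \<le> s - x" using e that by (simp add: smallest_positive_def)
    then show ?thesis by (simp add: le_diff_eq add.commute)
  qed
  show ?case
  proof (cases "n = 0")
    case True
    then show ?thesis using s Suc.prems(4) below_s by auto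
  next
    case False
    then obtain s' where s': "s' \<in> S - {s}" "a + gmul n e \<le> s'"
      using Suc.hyps[of "S - {s}"] Suc.prems s by auto
    have "s' < s" using s s' by (auto simp: order_less_le)
    have "a + gmul (Suc n) e \<le> s' + e"
      using s'(2) by (simp add: add.assoc[symmetric] add_right_mono)
    also have "\<dots> \<le> s" using below_s[OF \<open>s' < s\<close>] .
    finally show ?thesis using s by blast
  qed
qed simp

text \<open>A discrete group in which every residue class modulo n\<Gamma> contains a multiple
  of the least positive element is regular: any interval with n elements contains
  a + n e, and some element of (a, a + n e] is divisible by n.\<close>
lemma regular_if_discrete_residues:
  fixes e :: "'g::linordered_ab_group_add"
  assumes e: "smallest_positive e"
    and residues: "\<And>n g. n \<ge> 1 \<Longrightarrow> \<exists>j. multiple_of n (g - gmul j e)"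
  shows "regular_group TYPE('g)"
  unfolding regular_group_def
proof (intro allI impI)
  fix n :: nat and a b :: 'g
  assume n: "n \<ge> 1" and "\<exists>S. S \<subseteq> {a<..<b} \<and> finite S \<and> card S = n"
  then obtain S where S: "S \<subseteq> {a<..<b}" "finite S" "card S = n" by blast
  moreover have "S \<subseteq> {a<..}" using S(1) by auto
  ultimately obtain s where "s \<in> S" "a + gmul n e \<le> s"
    using points_above[OF e _ _ n] by blast
  then have "a + gmul n e < b" using S(1) by fastforce
  obtain j where j: "multiple_of n (a - gmul j e)" using residues n by blast
  define q r where "q = j div n" and "r = j mod n"
  have r: "0 < n - r" "n - r \<le> n" using n by (auto simp: r_def)
  have "j = n * q + r" by (simp add: q_def r_def)
  then have "j + (n - r) = n * (q + 1)" using r by simp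
  then have "gmul j e + gmul (n - r) e = gmul n (gmul (q + 1) e)"
    by (metis gmul_add_left gmul_mult)
  then have eq: "a + gmul (n - r) e = (a - gmul j e) + gmul n (gmul (q + 1) e)"
    by (simp add: algebra_simps)
  have div: "multiple_of n (a + gmul (n - r) e)"
    unfolding eq using j by (intro multiple_of_add) simp_all
  have "0 < gmul (n - r) e" using e r by (simp add: gmul_pos smallest_positive_def)
  moreover have "gmul (n - r) e \<le> gmul n e"
    using gmul_add_left[of "n - r" r e] r gmul_nonneg[of e r] e
    by (simp add: smallest_positive_def less_imp_le)
  moreover have "a + gmul (n - r) e < b"
    using \<open>a + gmul n e < b\<close> \<open>gmul (n - r) e \<le> gmul n e\<close>
    by (meson add_left_mono le_less_trans)
  ultimately have "a + gmul (n - r) e \<in> {a<..<b}" by simp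
  then show "\<exists>x\<in>{a<..<b}. \<exists>y. x = gmul n y"
    using div unfolding multiple_of_def by blast
qed

section \<open>The tent function\<close>

text \<open>The tent function \<delta> \<mapsto> min(M\<delta>, \<gamma> + M(\<mu> - \<delta>)): the minimum of the values of the
  monomials x^M and b y^M at a point of the hyperbola x y = c with v(x) = \<delta>.\<close>
definition tent :: "nat \<Rightarrow> 'g::linordered_ab_group_add \<Rightarrow> 'g \<Rightarrow> 'g \<Rightarrow> 'g" where
  "tent M \<gamma> \<mu> \<delta> = min (gmul M \<delta>) (\<gamma> + gmul M (\<mu> - \<delta>))"

lemma tent_reflect: "tent M \<gamma> \<mu> \<delta> = \<gamma> + tent M (- \<gamma>) \<mu> (\<mu> - \<delta>)"
  by (simp add: tent_def min_add_distrib_right min.commute)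

text \<open>If the tent function attains its maximum on [u, \<mu>] at a point u of the rising
  branch, the peak cannot be approached from u, which forces discreteness; the
  gap between the branches at u is then a multiple of e.\<close>
lemma tent_max_rising:
  fixes \<gamma> \<mu> u :: "'g::linordered_ab_group_add"
  assumes M: "M \<ge> 1"
    and rising: "gmul M u < \<gamma> + gmul M (\<mu> - u)"
    and top: "\<gamma> \<le> gmul M \<mu>"
    and max: "\<And>\<delta>. u \<le> \<delta> \<Longrightarrow> \<delta> \<le> \<mu> \<Longrightarrow> tent M \<gamma> \<mu> \<delta> \<le> tent M \<gamma> \<mu> u"
  shows "\<exists>e. smallest_positive e \<and> (\<exists>j. multiple_of M (\<gamma> - gmul j e))"
proof -
  define D where "D = \<gamma> + gmul M (\<mu> - u) - gmul M u"
  have D: "0 < D" using rising by (simp add: D_def)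
  have w: "0 < \<mu> - u"
  proof (rule ccontr)
    assume "\<not> 0 < \<mu> - u"
    then have "gmul M (\<mu> - u) \<le> 0" and "gmul M \<mu> \<le> gmul M u"
      using gmul_mono[of "\<mu> - u" 0 M] gmul_mono[of \<mu> u M] by simp_all
    then have "\<gamma> + gmul M (\<mu> - u) \<le> gmul M u" using top by (metis add_le_same_cancel1 order_trans)
    then show False using rising by simp
  qed
  have gap: "D \<le> gmul M h" if h: "0 < h" "h \<le> \<mu> - u" for h
  proof (rule ccontr)
    assume "\<not> D \<le> gmul M h"
    then have "gmul M u < \<gamma> + gmul M (\<mu> - (u + h))"
      by (simp add: D_def gmul_diff gmul_add_right algebra_simps)
    moreover have "gmul M u < gmul M (u + h)"
      using gmul_pos[OF h(1) M] by (simp add: gmul_add_right)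
    moreover have "tent M \<gamma> \<mu> (u + h) \<le> gmul M u"
      using max[of "u + h"] rising h by (simp add: tent_def algebra_simps)
    ultimately show False by (auto simp: tent_def min_le_iff_disj)
  qed
  obtain e j where "smallest_positive e" "D = gmul j e"
    using smallest_positive_from_gap[OF D w gap] by blast
  moreover have "\<gamma> - D = gmul M (u - (\<mu> - u))"
    by (simp add: D_def gmul_diff gmul_add_right algebra_simps)
  ultimately show ?thesis by (metis multiple_of_gmul)
qed

text \<open>The falling
  branch reduces to the rising one by reflection.\<close>
lemma tent_max_discrete:
  fixes \<gamma> \<mu> u :: "'g::linordered_ab_group_add"
  assumes M: "M \<ge> 1" and ndiv: "\<not> multiple_of M \<gamma>"
    and bounds: "\<gamma> \<le> gmul M \<mu>" "- \<gamma> \<le> gmul M \<mu>"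
    and u: "0 \<le> u" "u \<le> \<mu>"
    and max: "\<And>\<delta>. 0 \<le> \<delta> \<Longrightarrow> \<delta> \<le> \<mu> \<Longrightarrow> tent M \<gamma> \<mu> \<delta> \<le> tent M \<gamma> \<mu> u"
  shows "\<exists>e. smallest_positive e \<and> (\<exists>j. multiple_of M (\<gamma> - gmul j e))"
proof -
  have "0 + gmul M u \<noteq> \<gamma> + gmul M (\<mu> - u)"
    using ndiv by (intro residue_distinct) simp
  then consider "gmul M u < \<gamma> + gmul M (\<mu> - u)" | "\<gamma> + gmul M (\<mu> - u) < gmul M u"
    by fastforce
  then show ?thesis
  proof cases
    case 1
    then show ?thesis using tent_max_rising[OF M 1 bounds(1)] max u by auto
  next
    case 2
    have "tent M (- \<gamma>) \<mu> \<delta> \<le> tent M (- \<gamma>) \<mu> (\<mu> - u)" if "\<mu> - u \<le> \<delta>" "\<delta> \<le> \<mu>" for \<delta>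
    proof -
      have "0 \<le> \<mu> - u" using u by simp
      then have "0 \<le> \<delta>" using that(1) by (rule order_trans)
      then have "tent M \<gamma> \<mu> (\<mu> - \<delta>) \<le> tent M \<gamma> \<mu> u"
        using that by (intro max) simp_all
      then show ?thesis
        unfolding tent_reflect[of M \<gamma> \<mu> "\<mu> - \<delta>"] tent_reflect[of M \<gamma> \<mu> u] by simp
    qed
    moreover have "gmul M (\<mu> - u) < - \<gamma> + gmul M (\<mu> - (\<mu> - u))" using 2 by (simp add: algebra_simps)
    ultimately obtain e j where e: "smallest_positive e" and j: "multiple_of M (- \<gamma> - gmul j e)"
      using tent_max_rising[OF M _ bounds(2)] by blast
    have "gmul ((M - 1) * j) e + gmul j e = gmul M (gmul j e)"
      using M by (simp add: gmul_add_left[symmetric] gmul_mult[symmetric] algebra_simps)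
    then have eq: "\<gamma> - gmul ((M - 1) * j) e = - (- \<gamma> - gmul j e) - gmul M (gmul j e)"
      by (simp add: algebra_simps)
    have "multiple_of M (\<gamma> - gmul ((M - 1) * j) e)"
      unfolding eq by (rule multiple_of_diff[OF multiple_of_uminus[OF j] multiple_of_gmul])
    then show ?thesis using e by blast
  qed
qed

section \<open>Valuations\<close>

context
  fixes v :: "'k::field \<Rightarrow> 'g::linordered_ab_group_add"
  assumes V: "valuation v"
begin

lemma v_mult: "x \<noteq> 0 \<Longrightarrow> y \<noteq> 0 \<Longrightarrow> v (x * y) = v x + v y"
  using V by (simp add: valuation_def)

lemma v_ultrametric: "x \<noteq> 0 \<Longrightarrow> y \<noteq> 0 \<Longrightarrow> x + y \<noteq> 0 \<Longrightarrow> min (v x) (v y) \<le> v (x + y)"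
  using V by (simp add: valuation_def)

lemma v_surj: "\<exists>x. x \<noteq> 0 \<and> v x = g"
proof -
  have "g \<in> v ` {x. x \<noteq> 0}" using V by (simp add: valuation_def)
  then show ?thesis by auto
qed

lemma v_one: "v 1 = 0"
  using v_mult[of 1 1] by simp

lemma v_uminus:
  assumes "x \<noteq> 0"
  shows "v (- x) = v x"
proof -
  have "v (- 1) + v (- 1) = 0 + 0" using v_mult[of "- 1" "- 1"] v_one by simp
  then have "v (- 1) = 0" by (rule double_cancel)
  then show ?thesis using v_mult[of "- 1" x] assms by simp
qed

lemma v_inverse: "x \<noteq> 0 \<Longrightarrow> v (inverse x) = - v x"
  using v_mult[of x "inverse x"] v_one by (simp add: eq_neg_iff_add_eq_0 add.commute)

lemma v_power: "x \<noteq> 0 \<Longrightarrow> v (x ^ n) = gmul n (v x)"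
  by (induct n) (auto simp: v_one v_mult algebra_simps)

lemma v_add_dominant:
  assumes s: "s \<noteq> 0" and t: "t = 0 \<or> v s < v t"
  shows "s + t \<noteq> 0 \<and> v (s + t) = v s"
proof (cases "t = 0")
  case False
  then have lt: "v s < v t" using t by simp
  have st: "s + t \<noteq> 0"
  proof
    assume "s + t = 0"
    then have "t = - s" by (simp add: eq_neg_iff_add_eq_0 add.commute)
    then show False using lt v_uminus[OF s] by simp
  qed
  have "min (v s) (v t) \<le> v (s + t)" using v_ultrametric[OF s False st] .
  then have "v s \<le> v (s + t)" using lt by simp
  moreover have "min (v (s + t)) (v (- t)) \<le> v s"
    using v_ultrametric[of "s + t" "- t"] st False s by simp
  then have "v (s + t) \<le> v s" using lt v_uminus[OF False] by (auto simp: min_le_iff_disj)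
  ultimately show ?thesis using st by simp
qed (use s in simp)

lemma v_add3_dominant:
  assumes "s \<noteq> 0" "t = 0 \<or> v s < v t" "u = 0 \<or> v s < v u"
  shows "s + t + u \<noteq> 0 \<and> v (s + t + u) = v s"
  using v_add_dominant[of s t] v_add_dominant[of "s + t" u] assms by auto

lemma v_sum3_le:
  assumes nz: "p \<noteq> 0 \<or> q \<noteq> 0 \<or> r \<noteq> 0"
    and pq: "p \<noteq> 0 \<Longrightarrow> q \<noteq> 0 \<Longrightarrow> v p \<noteq> v q"
    and pr: "p \<noteq> 0 \<Longrightarrow> r \<noteq> 0 \<Longrightarrow> v p \<noteq> v r"
    and qr: "q \<noteq> 0 \<Longrightarrow> r \<noteq> 0 \<Longrightarrow> v q \<noteq> v r"
  shows "p + q + r \<noteq> 0 \<and> (\<forall>x\<in>{p, q, r}. x \<noteq> 0 \<longrightarrow> v (p + q + r) \<le> v x)"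
proof -
  let ?below = "\<lambda>s x. x = 0 \<or> v s < v x"
  consider "p \<noteq> 0" "?below p q" "?below p r" | "q \<noteq> 0" "?below q p" "?below q r"
    | "r \<noteq> 0" "?below r p" "?below r q"
    using nz pq pr qr
    by (cases "p = 0"; cases "q = 0"; cases "r = 0")
       (auto simp: linorder_neq_iff dest: order.strict_trans)
  then show ?thesis
  proof cases
    case 1
    then show ?thesis using v_add3_dominant[of p q r] by auto
  next
    case 2
    then show ?thesis using v_add3_dominant[of q p r] by (auto simp: add.commute)
  next
    case 3
    then show ?thesis using v_add3_dominant[of r p q] by (auto simp: algebra_simps)
  qed
qed

end

section \<open>The test polynomial\<close>

definition test_poly :: "nat \<Rightarrow> 'k::field \<Rightarrow> 'k \<Rightarrow> 'k \<Rightarrow> 'k \<Rightarrow> 'k \<Rightarrow> 'k" where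
  "test_poly M b c d x y = x ^ M + b * y ^ M + d * (x * y - c) ^ M"

lemma poly_fun_power: "f \<in> poly_fun n \<Longrightarrow> (\<lambda>a. f a ^ k) \<in> poly_fun n"
proof (induct k)
  case 0
  then show ?case using poly_fun.pf_const[of 1 n] by simp
next
  case (Suc k)
  then show ?case using poly_fun.pf_mult[OF Suc.prems Suc.hyps[OF Suc.prems]] by simp
qed

lemma test_poly_poly_fun: "(\<lambda>a. test_poly M b c d (a 0) (a 1)) \<in> poly_fun 2"
proof -
  have x: "(\<lambda>a. a 0) \<in> poly_fun 2" and y: "(\<lambda>a. a 1) \<in> poly_fun 2"
    by (simp_all add: poly_fun.pf_var)
  have "(\<lambda>a. a 0 * a 1 + - c) \<in> poly_fun 2"
    by (intro poly_fun.pf_add poly_fun.pf_mult x y poly_fun.pf_const)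
  then have z: "(\<lambda>a. (a 0 * a 1 - c) ^ M) \<in> poly_fun 2"
    using poly_fun_power by fastforce
  show ?thesis unfolding test_poly_def
    by (intro poly_fun.pf_add poly_fun.pf_mult poly_fun.pf_const poly_fun_power x y z)
qed

context
  fixes v :: "'k::field \<Rightarrow> 'g::linordered_ab_group_add" and M :: nat and b c d :: 'k
  assumes V: "valuation v" and M: "M \<ge> 1" and bcd: "b \<noteq> 0" "c \<noteq> 0" "d \<noteq> 0"
    and residues: "\<not> multiple_of M (v b)" "\<not> multiple_of M (v d)" "\<not> multiple_of M (v d - v b)"
begin

text \<open>If v(b), v(d) and v(d) - v(b) are not in M\<Gamma>, the three monomials of F have values
  in distinct cosets of M\<Gamma>, so F never vanishes and v(F) is bounded by each of them.\<close>
lemma test_poly_upper: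
  "test_poly M b c d x y \<noteq> 0 \<and>
   (x \<noteq> 0 \<longrightarrow> v (test_poly M b c d x y) \<le> gmul M (v x)) \<and>
   (y \<noteq> 0 \<longrightarrow> v (test_poly M b c d x y) \<le> v b + gmul M (v y)) \<and>
   (x * y - c \<noteq> 0 \<longrightarrow> v (test_poly M b c d x y) \<le> v d + gmul M (v (x * y - c)))"
proof -
  define z where "z = x * y - c"
  have nz: "x ^ M \<noteq> 0 \<longleftrightarrow> x \<noteq> 0" "b * y ^ M \<noteq> 0 \<longleftrightarrow> y \<noteq> 0" "d * z ^ M \<noteq> 0 \<longleftrightarrow> z \<noteq> 0"
    using M bcd by auto
  have val: "x \<noteq> 0 \<Longrightarrow> v (x ^ M) = 0 + gmul M (v x)"
    "y \<noteq> 0 \<Longrightarrow> v (b * y ^ M) = v b + gmul M (v y)"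
    "z \<noteq> 0 \<Longrightarrow> v (d * z ^ M) = v d + gmul M (v z)"
    using bcd by (simp_all add: v_power[OF V] v_mult[OF V])
  have "x \<noteq> 0 \<or> y \<noteq> 0 \<or> z \<noteq> 0" using bcd by (auto simp: z_def)
  then have "x ^ M + b * y ^ M + d * z ^ M \<noteq> 0 \<and>
      (\<forall>t\<in>{x ^ M, b * y ^ M, d * z ^ M}. t \<noteq> 0 \<longrightarrow> v (x ^ M + b * y ^ M + d * z ^ M) \<le> v t)"
    using residue_distinct[of M] residues nz val
    by (intro v_sum3_le[OF V]) (auto simp del: add_0)
  then show ?thesis using nz val by (simp add: test_poly_def z_def)
qed

text \<open>On the hyperbola x y = c the third monomial vanishes and v(F) is at least the
  tent function of v(x).\<close>
lemma test_poly_on_hyperbola: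
  assumes x: "x \<noteq> 0" and xy: "x * y = c"
  shows "tent M (v b) (v c) (v x) \<le> v (test_poly M b c d x y)"
proof -
  have y: "y \<noteq> 0" using xy bcd by auto
  have "v y = v c - v x" using v_mult[OF V x y] xy by simp
  then have vals: "v (x ^ M) = gmul M (v x)" "v (b * y ^ M) = v b + gmul M (v c - v x)"
    using x y bcd by (simp_all add: v_power[OF V] v_mult[OF V])
  have sum: "test_poly M b c d x y = x ^ M + b * y ^ M"
    using xy M by (simp add: test_poly_def)
  then have "test_poly M b c d x y \<noteq> 0" using test_poly_upper by metis
  then have "min (v (x ^ M)) (v (b * y ^ M)) \<le> v (test_poly M b c d x y)"
    unfolding sum using x y bcd by (intro v_ultrametric[OF V]) simp_all
  then show ?thesis by (simp add: vals tent_def)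
qed

end

section \<open>Extremal fields\<close>

lemma ext_le_vext: "x \<noteq> 0 \<Longrightarrow> y \<noteq> 0 \<Longrightarrow> ext_le (vext v x) (vext v y) \<longleftrightarrow> v x \<le> v y"
  by (simp add: ext_le_def vext_def)

lemma extremal_maximizer:
  fixes v :: "'k::field \<Rightarrow> 'g::linordered_ab_group_add" and f :: "'k \<Rightarrow> 'k \<Rightarrow> 'k"
  assumes "extremal v" and "(\<lambda>a. f (a 0) (a 1)) \<in> poly_fun 2"
  shows "\<exists>x\<in>val_ring v. \<exists>y\<in>val_ring v. \<forall>x'\<in>val_ring v. \<forall>y'\<in>val_ring v.
           ext_le (vext v (f x' y')) (vext v (f x y))"
proof -
  obtain a where a: "\<forall>i<2::nat. a i \<in> val_ring v"
    and max: "\<And>p. \<forall>i<2::nat. p i \<in> val_ring v \<Longrightarrow> ext_le (vext v (f (p 0) (p 1))) (vext v (f (a 0) (a 1)))"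
    using assms(1)[unfolded extremal_def, rule_format, OF _ assms(2)] by auto
  have "ext_le (vext v (f x' y')) (vext v (f (a 0) (a 1)))"
    if "x' \<in> val_ring v" "y' \<in> val_ring v" for x' y'
    using max[of "\<lambda>i. if i = 0 then x' else y'"] that by (simp add: less_2_cases_iff)
  moreover have "a 0 \<in> val_ring v" "a 1 \<in> val_ring v" using a by simp_all
  ultimately show ?thesis by blast
qed

context
  fixes v :: "'k::field \<Rightarrow> 'g::linordered_ab_group_add" and M :: nat and b c d x y :: 'k
  assumes V: "valuation v" and M: "M \<ge> 1" and bcd: "b \<noteq> 0" "c \<noteq> 0" "d \<noteq> 0"
    and residues: "\<not> multiple_of M (v b)" "\<not> multiple_of M (v d)" "\<not> multiple_of M (v d - v b)"
    and xy: "x \<in> val_ring v" "y \<in> val_ring v"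
    and max: "\<forall>x'\<in>val_ring v. \<forall>y'\<in>val_ring v.
       ext_le (vext v (test_poly M b c d x' y')) (vext v (test_poly M b c d x y))"
begin

text \<open>Testing the maximiser against points of the hyperbola: its value dominates the
  tent function on [0, v(c)].\<close>
lemma test_poly_max_ge_tent:
  assumes "0 \<le> \<delta>" "\<delta> \<le> v c"
  shows "tent M (v b) (v c) \<delta> \<le> v (test_poly M b c d x y)"
proof -
  obtain t where t: "t \<noteq> 0" "v t = \<delta>" using v_surj[OF V] by blast
  define s where "s = c * inverse t"
  have s: "s \<noteq> 0" "t * s = c" using t bcd by (simp_all add: s_def)
  have "v s = v c - \<delta>" using v_mult[OF V, of c "inverse t"] v_inverse[OF V t(1)] t bcd
    by (simp add: s_def)
  then have "t \<in> val_ring v" "s \<in> val_ring v" using assms t by (simp_all add: val_ring_def)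
  then have "ext_le (vext v (test_poly M b c d t s)) (vext v (test_poly M b c d x y))"
    using max by blast
  moreover have "test_poly M b c d t s \<noteq> 0" "test_poly M b c d x y \<noteq> 0"
    using test_poly_upper[OF V M bcd residues] by blast+
  ultimately have "v (test_poly M b c d t s) \<le> v (test_poly M b c d x y)"
    by (simp add: ext_le_vext)
  then show ?thesis
    using test_poly_on_hyperbola[OF V M bcd residues t(1) s(2)] t(2) by simp
qed

text \<open>Since v(d) + M v(c) < 0 while the maximal value is nonnegative, the maximiser
  (x, y) satisfies v(xy - c) > v(c), hence v(x) + v(y) = v(c).\<close>
lemma test_poly_max_on_hyperbola:
  assumes bounds: "0 \<le> v c" "- v b \<le> gmul M (v c)" and deep: "v d + gmul M (v c) < 0"
  shows "x \<noteq> 0 \<and> y \<noteq> 0 \<and> v x + v y = v c"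
proof -
  have "0 \<le> v b + gmul M (v c)" using add_left_mono[OF bounds(2), of "v b"] by simp
  then have "0 \<le> tent M (v b) (v c) 0" by (simp add: tent_def)
  then have w: "0 \<le> v (test_poly M b c d x y)"
    using test_poly_max_ge_tent[of 0] bounds by simp
  have near: "x * y = c \<or> v c < v (x * y - c)"
  proof (rule ccontr)
    assume "\<not> ?thesis"
    then have "x * y - c \<noteq> 0" "v (x * y - c) \<le> v c" by auto
    then have "v (test_poly M b c d x y) \<le> v d + gmul M (v (x * y - c))"
      and "v d + gmul M (v (x * y - c)) \<le> v d + gmul M (v c)"
      using test_poly_upper[OF V M bcd residues] by (simp_all add: gmul_mono)
    then have "v (test_poly M b c d x y) \<le> v d + gmul M (v c)" by (rule order_trans)
    then show False using w deep by simp
  qed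
  have "x * y \<noteq> 0 \<and> v (x * y) = v c"
    using near v_add_dominant[OF V bcd(2), of "x * y - c"] by auto
  then show ?thesis using v_mult[OF V] by auto
qed

end

lemma extremal_key:
  fixes v :: "'k::field \<Rightarrow> 'g::linordered_ab_group_add"
  assumes V: "valuation v" and E: "extremal v" and M: "M \<ge> 1"
    and ndiv: "\<not> multiple_of M \<gamma>" and ndiv2: "\<not> multiple_of M (\<gamma> + \<gamma>)"
  shows "\<exists>e::'g. smallest_positive e \<and> (\<exists>j. multiple_of M (\<gamma> - gmul j e))"
proof -
  define \<mu> where "\<mu> = max \<gamma> (- \<gamma>)"
  have "\<gamma> \<noteq> 0" using ndiv by auto
  then have "0 < \<mu>" by (auto simp: \<mu>_def max_def neg_less_0_iff_less)
  then have "\<mu> \<le> gmul M \<mu>" using M by (simp add: gmul_ge)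
  moreover have "\<gamma> \<le> \<mu>" "- \<gamma> \<le> \<mu>" by (simp_all add: \<mu>_def)
  ultimately have bounds: "\<gamma> \<le> gmul M \<mu>" "- \<gamma> \<le> gmul M \<mu>" by (auto intro: order_trans)
  define \<epsilon> where "\<epsilon> = \<gamma> + \<gamma> - gmul M (\<mu> + \<mu> + \<mu> + \<mu>)"
  have "\<not> multiple_of M \<epsilon>"
  proof
    assume "multiple_of M \<epsilon>"
    then have "multiple_of M (\<epsilon> + gmul M (\<mu> + \<mu> + \<mu> + \<mu>))" by (rule multiple_of_add) simp
    with ndiv2 show False by (simp add: \<epsilon>_def)
  qed
  moreover have "\<not> multiple_of M (\<epsilon> - \<gamma>)"
  proof
    assume "multiple_of M (\<epsilon> - \<gamma>)"
    then have "multiple_of M (\<epsilon> - \<gamma> + gmul M (\<mu> + \<mu> + \<mu> + \<mu>))" by (rule multiple_of_add) simp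
    with ndiv show False by (simp add: \<epsilon>_def)
  qed
  moreover have "\<epsilon> + gmul M \<mu> < 0"
  proof -
    have eq: "\<epsilon> + gmul M \<mu> = (\<gamma> - gmul M \<mu>) + (\<gamma> - gmul M \<mu>) - gmul M \<mu>"
      by (simp add: \<epsilon>_def gmul_add_right algebra_simps)
    have "(\<gamma> - gmul M \<mu>) + (\<gamma> - gmul M \<mu>) \<le> 0"
      using bounds(1) by (simp add: add_nonpos_nonpos)
    also have "0 < gmul M \<mu>" using gmul_pos[OF \<open>0 < \<mu>\<close> M] .
    finally show ?thesis unfolding eq by (simp only: diff_less_0_iff_less)
  qed
  moreover obtain b where "b \<noteq> 0" "v b = \<gamma>" using v_surj[OF V] by blast
  moreover obtain c where "c \<noteq> 0" "v c = \<mu>" using v_surj[OF V] by blast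
  moreover obtain d where "d \<noteq> 0" "v d = \<epsilon>" using v_surj[OF V] by blast
  ultimately have choice: "b \<noteq> 0" "c \<noteq> 0" "d \<noteq> 0" "\<not> multiple_of M (v b)" "\<not> multiple_of M (v d)"
      "\<not> multiple_of M (v d - v b)" "v b = \<gamma>" "v c = \<mu>" "v d + gmul M (v c) < 0"
    using ndiv by auto
  obtain x y where xy: "x \<in> val_ring v" "y \<in> val_ring v"
    and max: "\<forall>x'\<in>val_ring v. \<forall>y'\<in>val_ring v.
       ext_le (vext v (test_poly M b c d x' y')) (vext v (test_poly M b c d x y))"
    using extremal_maximizer[OF E test_poly_poly_fun] by blast
  have "x \<noteq> 0 \<and> y \<noteq> 0 \<and> v x + v y = \<mu>"
    using test_poly_max_on_hyperbola[OF V M choice(1-6) xy max] \<open>0 < \<mu>\<close> bounds choice by simp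
  then have x: "x \<noteq> 0" "0 \<le> v x" "v x \<le> \<mu>" and y: "y \<noteq> 0" "v y = \<mu> - v x"
    using xy by (auto simp: val_ring_def algebra_simps)
  have "v (test_poly M b c d x y) \<le> tent M \<gamma> \<mu> (v x)"
    using test_poly_upper[OF V M choice(1-6), of x y] x y choice by (simp add: tent_def)
  moreover have "tent M \<gamma> \<mu> \<delta> \<le> v (test_poly M b c d x y)" if "0 \<le> \<delta>" "\<delta> \<le> \<mu>" for \<delta>
    using test_poly_max_ge_tent[OF V M choice(1-6) xy max] that choice by simp
  ultimately show ?thesis
    using tent_max_discrete[OF M ndiv bounds x(2,3)] order_trans by blast
qed

lemma extremal_residue:
  fixes v :: "'k::field \<Rightarrow> 'g::linordered_ab_group_add"
  assumes V: "valuation v" and E: "extremal v" and n: "n \<ge> 1" and ndiv: "\<not> multiple_of n g"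
  shows "\<exists>e::'g. smallest_positive e \<and> (\<exists>j. multiple_of n (g - gmul j e))"
proof -
  have "\<not> multiple_of (2 * n) g" using ndiv multiple_of_mult_left by blast
  moreover have "\<not> multiple_of (2 * n) (g + g)"
  proof
    assume "multiple_of (2 * n) (g + g)"
    then obtain z where "g + g = gmul (2 * n) z" by (auto simp: multiple_of_def)
    then have "g + g = gmul n z + gmul n z"
      using gmul_mult[of 2 n z] by (simp add: numeral_2_eq_2)
    then have "g = gmul n z" by (rule double_cancel)
    with ndiv show False by simp
  qed
  moreover have "2 * n \<ge> 1" using n by simp
  ultimately obtain e :: 'g and j where "smallest_positive e" "multiple_of (2 * n) (g - gmul j e)"
    using extremal_key[OF V E] by blast
  then show ?thesis using multiple_of_mult_left by blast
qed

theorem theorem3p6: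
  fixes v :: "'k::field \<Rightarrow> 'g::linordered_ab_group_add"
  assumes "valuation v"
    and "extremal v"
  shows "divisible_group TYPE('g) \<or> Z_group TYPE('g)"
proof (cases "divisible_group TYPE('g)")
  case False
  then obtain N and \<gamma> :: 'g where "N \<ge> 1" "\<not> multiple_of N \<gamma>"
    unfolding divisible_group_def multiple_of_def by metis
  then obtain e :: 'g where e: "smallest_positive e"
    using extremal_residue[OF assms] by blast
  have "\<exists>j. multiple_of n (g - gmul j e)" if "n \<ge> 1" for n and g :: 'g
  proof (cases "multiple_of n g")
    case True
    then have "multiple_of n (g - gmul 0 e)" by simp
    then show ?thesis ..
  next
    case False
    then show ?thesis
      using extremal_residue[OF assms that] smallest_positive_unique[OF e] by blast
  qed
  then have "regular_group TYPE('g)" by (rule regular_if_discrete_residues[OF e])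
  then show ?thesis using e by (auto simp: Z_group_def smallest_positive_def)
qed simp

end
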